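(* Let $\mu = (\mu_1,\mu_2,\ldots,\mu_n)$, $k = \sum_{i=1}^n \mu_i$, and $n = \sum_{i=1}^n i\mu_i$. Let $d$ be a positive integer such that $d \mid (n+2)$, and let $\zeta_d$ be a primitive $d$-th root of unity. \begin{enumerate} \item If there is one index $j$ such that $\mu_j \equiv 1 \pmod{d}$ and $\mu_i \equiv 0 \pmod{d}$ for all $i \neq j$, then \[ a_\mu(\zeta_d) = \binom{\frac{n+2}{d} + \frac{k-1}{d} - 1}{\frac{k-1}{d}} \binom{\frac{k-1}{d}}{\lfloor \frac{\mu_1}{d}\rfloor, \lfloor \frac{\mu_2}{d}\rfloor, \ldots, \lfloor \frac{\mu_n}{d}\rfloor} . \] \item If $d = 2$ and all $\mu_i$ are even, then \[ a_\mu(\zeta_{2}) = a_\mu(-1) = \binom{\frac{n+k}{2}}{\frac{k}{2}}\binom{\frac{k}{2}}{\frac{\mu_1}{2},\frac{\mu_2}{2},\ldots,\frac{\mu_n}{2}}. \] \item If $\mu$ satisfies neither (a) there is exactly one index $j$ with $\mu_j \equiv 1 \pmod{d}$ and $\mu_i \equiv 0 \pmod{d}$ for all $i \neq j$, nor (b) $d = 2$ and all $\mu_i$ are even, then $a_\mu(\zeta_d) = 0$. \end{enumerate}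
   Context: $a_\mu(q) = \frac{1}{[n+1]_q} \left[\begin{smallmatrix} n+k \\ k\end{smallmatrix}\right]_q \left[\begin{smallmatrix} k \\ \mu_1,\mu_2,\ldots,\mu_n\end{smallmatrix}\right]_q$, the naive $q$-analogue of $a_\mu = \frac{1}{n+1}\binom{n+k}{k}\binom{k}{\mu_1,\ldots,\mu_n}$, where $[\cdot]_q$ denotes $q$-integers and the bracketed expressions are $q$-binomial and $q$-multinomial coefficients. *)

theory Defs
  imports Complex_Main "HOL-Computational_Algebra.Polynomial"
begin

definition qint :: "nat \<Rightarrow> complex poly" where
  "qint m = (\<Sum>i<m. monom 1 i)"

definition qfact :: "nat \<Rightarrow> complex poly" where
  "qfact m = (\<Prod>i=1..m. qint i)"

(* q-binomial coefficient [a choose b]_q = [a]_q! / ([b]_q! [a-b]_q!)  (exact polynomial division) *)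
definition qbinom :: "nat \<Rightarrow> nat \<Rightarrow> complex poly" where
  "qbinom a b = qfact a div (qfact b * qfact (a - b))"

definition qmultinom :: "nat \<Rightarrow> nat \<Rightarrow> (nat \<Rightarrow> nat) \<Rightarrow> complex poly" where
  "qmultinom m n mu = qfact m div (\<Prod>i=1..n. qfact (mu i))"

definition kval :: "nat \<Rightarrow> (nat \<Rightarrow> nat) \<Rightarrow> nat" where
  "kval n mu = (\<Sum>i=1..n. mu i)"

definition a_mu :: "nat \<Rightarrow> (nat \<Rightarrow> nat) \<Rightarrow> complex \<Rightarrow> complex" where
  "a_mu n mu q =
     poly (qbinom (n + kval n mu) (kval n mu) * qmultinom (kval n mu) n mu) q
       / poly (qint (n + 1)) q"

definition multinom :: "nat \<Rightarrow> nat \<Rightarrow> (nat \<Rightarrow> nat) \<Rightarrow> complex" where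
  "multinom m n a = of_nat (fact m) / of_nat (\<Prod>i=1..n. fact (a i))"

definition primitive_root :: "nat \<Rightarrow> complex \<Rightarrow> bool" where
  "primitive_root d z \<longleftrightarrow> z ^ d = 1 \<and> (\<forall>m. 0 < m \<and> m < d \<longrightarrow> z ^ m \<noteq> 1)"

end

theory Submission
  imports Defs
begin

(* At a primitive d-th root of unity z we have [m]_z = [m mod d]_z, and [d]_z = 0 for d >= 2.
   Hence [m]_q! = [d]_q^(m div d) * R_m(q) with R_m(z) = (m div d)! * ([d-1]_z!)^(m div d) * [m mod d]_z!
   nonzero.  An exact quotient of q-factorials such as a q-binomial or q-multinomial coefficient therefore
   vanishes at z unless the powers of [d]_q cancel, i.e. unless adding the parts in base d produces no carry,
   and otherwise its value is the corresponding quotient of the R_m(z).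
   For a_mu, d | n + 2 gives n mod d = d - 2, so absence of carries forces sum_i (mu_i mod d) <= 1:
   residue sum 1 is case (a), while residue sum 0 gives d | n, hence d = 2, which is case (b).
   For d = 1 we have z = 1 and case (a) is the classical evaluation of a_mu(1). *)

lemma qint_0 [simp]: "qint 0 = 0"
  by (simp add: qint_def)

lemma qint_Suc: "qint (Suc m) = qint m + monom 1 m"
  by (simp add: qint_def)

lemma qint_add: "qint (a + b) = qint a + monom 1 a * qint b"
  by (induction b) (simp_all add: qint_Suc algebra_simps mult_monom)

lemma qint_mult: "qint (d * s) = qint d * (\<Sum>j<s. monom 1 (d * j))"
proof (induction s)
  case (Suc s)
  have "qint (d * Suc s) = qint (d * s) + monom 1 (d * s) * qint d"
    using qint_add[of "d * s" d] by (simp add: add.commute)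
  with Suc show ?case
    by (simp add: distrib_left mult.commute)
qed simp

lemma poly_qint: "poly (qint m) z = (\<Sum>i<m. z ^ i)"
  by (simp add: qint_def poly_sum poly_monom)

lemma one_minus_mult_poly_qint: "(1 - z) * poly (qint m) z = 1 - z ^ m"
  by (simp add: poly_qint one_diff_power_eq)

lemma qint_eq_0_iff [simp]: "qint d = 0 \<longleftrightarrow> d = 0"
proof
  assume "qint d = 0"
  then have "poly (qint d) (1::complex) = 0" by simp
  then show "d = 0" by (simp add: poly_qint)
qed simp

lemma qfact_0 [simp]: "qfact 0 = 1"
  by (simp add: qfact_def)

lemma qfact_1 [simp]: "qfact (Suc 0) = 1"
  by (simp add: qfact_def qint_def)

lemma qfact_Suc: "qfact (Suc m) = qfact m * qint (Suc m)"
  by (simp add: qfact_def)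

fun gauss_poly :: "nat \<Rightarrow> nat \<Rightarrow> complex poly" where
  "gauss_poly a 0 = 1"
| "gauss_poly 0 (Suc b) = 0"
| "gauss_poly (Suc a) (Suc b) = gauss_poly a b + monom 1 (Suc b) * gauss_poly a (Suc b)"

lemma gauss_poly_eq_0: "a < b \<Longrightarrow> gauss_poly a b = 0"
proof (induction a arbitrary: b)
  case 0
  then show ?case by (cases b) auto
next
  case (Suc a)
  then show ?case by (cases b) auto
qed

lemma gauss_poly_mult_qfact:
  "b \<le> a \<Longrightarrow> gauss_poly a b * qfact b * qfact (a - b) = qfact a"
proof (induction a arbitrary: b)
  case (Suc a)
  show ?case
  proof (cases b)
    case (Suc c)
    with Suc.prems have "c \<le> a" by simp
    have first: "gauss_poly a c * qfact (Suc c) * qfact (a - c) = qfact a * qint (Suc c)"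
      using Suc.IH[OF \<open>c \<le> a\<close>] by (simp add: qfact_Suc mult_ac)
    have second: "monom 1 (Suc c) * gauss_poly a (Suc c) * qfact (Suc c) * qfact (a - c)
        = monom 1 (Suc c) * qfact a * qint (a - c)"
    proof (cases "c = a")
      case False
      with \<open>c \<le> a\<close> have "Suc c \<le> a" "a - c = Suc (a - Suc c)" by simp_all
      with Suc.IH[of "Suc c"] show ?thesis
        by (simp add: qfact_Suc mult_ac)
    qed (simp add: gauss_poly_eq_0)
    have "gauss_poly (Suc a) b * qfact b * qfact (Suc a - b)
        = gauss_poly a c * qfact (Suc c) * qfact (a - c)
          + monom 1 (Suc c) * gauss_poly a (Suc c) * qfact (Suc c) * qfact (a - c)"
      by (simp add: \<open>b = Suc c\<close> distrib_right)
    also have "\<dots> = qfact a * (qint (Suc c) + monom 1 (Suc c) * qint (a - c))"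
      unfolding first second by (simp add: algebra_simps)
    also have "qint (Suc c) + monom 1 (Suc c) * qint (a - c) = qint (Suc a)"
      using qint_add[of "Suc c" "a - c"] \<open>c \<le> a\<close> by simp
    finally show ?thesis
      by (simp add: qfact_Suc)
  qed simp
qed simp

lemma qfact_mult_qfact_dvd: "b \<le> a \<Longrightarrow> qfact b * qfact (a - b) dvd qfact a"
  by (metis dvdI gauss_poly_mult_qfact mult.assoc mult.commute)

lemma qbinom_mult: "b \<le> a \<Longrightarrow> qbinom a b * (qfact b * qfact (a - b)) = qfact a"
  unfolding qbinom_def by (rule dvd_div_mult_self[OF qfact_mult_qfact_dvd])

lemma prod_qfact_dvd_qfact_sum:
  "finite A \<Longrightarrow> (\<Prod>i\<in>A. qfact (f i)) dvd qfact (\<Sum>i\<in>A. f i)"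
proof (induction A rule: finite_induct)
  case (insert x A)
  then have "(\<Prod>i\<in>insert x A. qfact (f i)) dvd qfact (f x) * qfact (sum f A)"
    by (simp add: mult_dvd_mono)
  also have "\<dots> dvd qfact (f x + sum f A)"
    using qfact_mult_qfact_dvd[of "f x" "f x + sum f A"] by simp
  finally show ?case
    using insert by simp
qed simp

lemma qmultinom_mult:
  "m = (\<Sum>i=1..n. mu i) \<Longrightarrow> qmultinom m n mu * (\<Prod>i=1..n. qfact (mu i)) = qfact m"
  unfolding qmultinom_def by (simp add: dvd_div_mult_self prod_qfact_dvd_qfact_sum)

lemma primitive_root_power_mod:
  assumes "primitive_root d z"
  shows "z ^ m = z ^ (m mod d)"
proof -
  have "z ^ m = z ^ (d * (m div d) + m mod d)"
    by simp
  also have "\<dots> = (z ^ d) ^ (m div d) * z ^ (m mod d)"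
    by (simp only: power_add power_mult)
  finally have "z ^ m = (z ^ d) ^ (m div d) * z ^ (m mod d)" .
  with assms show ?thesis
    unfolding primitive_root_def by simp
qed

lemma primitive_root_ne_1:
  assumes "primitive_root d z" "2 \<le> d"
  shows "z \<noteq> 1"
proof -
  from assms(2) have "0 < (1::nat) \<and> 1 < d"
    by simp
  with assms(1) have "z ^ 1 \<noteq> 1"
    unfolding primitive_root_def by blast
  then show ?thesis
    by simp
qed

lemma primitive_root_1_iff: "primitive_root 1 z \<longleftrightarrow> z = 1"
  by (auto simp: primitive_root_def)

lemma poly_qint_mod:
  assumes "primitive_root d z" "2 \<le> d"
  shows "poly (qint m) z = poly (qint (m mod d)) z"
proof -
  have "(1 - z) * poly (qint m) z = (1 - z) * poly (qint (m mod d)) z"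
    unfolding one_minus_mult_poly_qint using primitive_root_power_mod[OF assms(1)] by simp
  then show ?thesis
    using primitive_root_ne_1[OF assms] by simp
qed

lemma poly_qint_self:
  "primitive_root d z \<Longrightarrow> 2 \<le> d \<Longrightarrow> poly (qint d) z = 0"
  using poly_qint_mod[of d z d] by simp

lemma poly_qfact_nonzero:
  assumes "primitive_root d z" "r < d"
  shows "poly (qfact r) z \<noteq> 0"
  using \<open>r < d\<close>
proof (induction r)
  case (Suc r)
  have "z ^ Suc r \<noteq> 1"
    using assms(1) Suc.prems unfolding primitive_root_def by blast
  then have "poly (qint (Suc r)) z \<noteq> 0"
    using one_minus_mult_poly_qint[of z "Suc r"] by auto
  with Suc show ?case
    by (simp add: qfact_Suc)
qed simp

lemma qint_power_dvd_qfact: "qint d ^ (m div d) dvd qfact m"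
proof (induction m)
  case (Suc m)
  show ?case
  proof (cases "Suc m mod d = 0")
    case True
    then have "Suc m = d * Suc (m div d)"
      by (metis div_Suc div_mult_mod_eq add_0_right mult.commute)
    then have "qint (Suc m) = qint d * (\<Sum>j<Suc (m div d). monom 1 (d * j))"
      by (simp only: qint_mult)
    with Suc.IH True show ?thesis
      by (simp add: div_Suc qfact_Suc mult_dvd_mono)
  next
    case False
    with Suc.IH show ?thesis
      by (simp add: div_Suc qfact_Suc)
  qed
qed simp

definition qfact_cofactor :: "nat \<Rightarrow> nat \<Rightarrow> complex poly" where
  "qfact_cofactor d m = qfact m div qint d ^ (m div d)"

lemma qfact_eq_qint_power_mult_cofactor: "qfact m = qint d ^ (m div d) * qfact_cofactor d m"
  unfolding qfact_cofactor_def by (simp add: qint_power_dvd_qfact)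

lemma qfact_cofactor_Suc:
  assumes "d > 0"
  shows "qfact_cofactor d (Suc m) = qfact_cofactor d m *
    (if Suc m mod d = 0 then (\<Sum>j<Suc m div d. monom 1 (d * j)) else qint (Suc m))"
    (is "_ = _ * ?factor")
proof -
  have "qfact (Suc m) = qint d ^ (Suc m div d) * (qfact_cofactor d m * ?factor)"
  proof (cases "Suc m mod d = 0")
    case True
    then have "Suc m = d * (Suc m div d)"
      by (metis div_mult_mod_eq add_0_right mult.commute)
    then have "qint (Suc m) = qint d * ?factor"
      using True by (metis qint_mult)
    with True show ?thesis
      unfolding qfact_Suc qfact_eq_qint_power_mult_cofactor[of m d] by (simp add: div_Suc mult_ac)
  next
    case False
    then show ?thesis
      unfolding qfact_Suc qfact_eq_qint_power_mult_cofactor[of m d] by (simp add: div_Suc mult_ac)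
  qed
  with assms show ?thesis
    unfolding qfact_cofactor_def by simp
qed

definition qfact_reduced :: "nat \<Rightarrow> complex \<Rightarrow> nat \<Rightarrow> complex" where
  "qfact_reduced d z m =
     fact (m div d) * poly (qfact (d - 1)) z ^ (m div d) * poly (qfact (m mod d)) z"

lemma poly_qfact_cofactor:
  assumes z: "primitive_root d z" and "d > 0"
  shows "poly (qfact_cofactor d m) z = qfact_reduced d z m"
proof (induction m)
  case 0
  show ?case
    by (simp add: qfact_cofactor_def qfact_reduced_def)
next
  case (Suc m)
  show ?case
  proof (cases "Suc m mod d = 0")
    case True
    then have "m mod d = d - 1" "Suc m div d = Suc (m div d)"
      using mod_Suc[of m d] div_Suc[of m d] by (auto split: if_splits)
    define S where "S = (\<Sum>j<Suc (m div d). monom 1 (d * j) :: complex poly)"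
    have "qfact_cofactor d (Suc m) = qfact_cofactor d m * S"
      using True \<open>Suc m div d = _\<close> by (simp add: qfact_cofactor_Suc[OF \<open>d > 0\<close>] S_def)
    moreover have "poly S z = of_nat (Suc (m div d))"
      using z by (simp add: S_def poly_sum poly_monom power_mult primitive_root_def)
    ultimately show ?thesis
      using Suc.IH True \<open>m mod d = d - 1\<close> \<open>Suc m div d = _\<close>
      by (simp add: qfact_reduced_def algebra_simps)
  next
    case False
    with \<open>d > 0\<close> have "2 \<le> d"
      by (cases "d = 1") auto
    from False have "Suc m mod d = Suc (m mod d)" "Suc m div d = m div d"
      using mod_Suc[of m d] div_Suc[of m d] by (auto split: if_splits)
    moreover have "poly (qint (Suc m)) z = poly (qint (Suc m mod d)) z"
      using poly_qint_mod[OF z \<open>2 \<le> d\<close>] .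
    ultimately show ?thesis
      using Suc.IH False
      by (simp add: qfact_cofactor_Suc[OF \<open>d > 0\<close>] qfact_reduced_def qfact_Suc)
  qed
qed

lemma qfact_reduced_nonzero:
  "primitive_root d z \<Longrightarrow> d > 0 \<Longrightarrow> qfact_reduced d z m \<noteq> 0"
  unfolding qfact_reduced_def by (simp add: poly_qfact_nonzero)

lemma qfact_reduced_small_residue:
  "m mod d \<le> 1 \<Longrightarrow> qfact_reduced d z m = fact (m div d) * poly (qfact (d - 1)) z ^ (m div d)"
  unfolding qfact_reduced_def by (auto simp: le_Suc_eq)

lemma prod_qfact_reduced_small_residues:
  assumes "\<forall>i\<in>A. f i mod d \<le> 1"
  shows "(\<Prod>i\<in>A. qfact_reduced d z (f i))
    = (\<Prod>i\<in>A. fact (f i div d)) * poly (qfact (d - 1)) z ^ (\<Sum>i\<in>A. f i div d)"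
  using assms by (simp add: qfact_reduced_small_residue prod.distrib power_sum)

lemma poly_qfact_quotient_at_root:
  assumes z: "primitive_root d z" and "d > 0"
    and quotient: "P * (qint d ^ e * Q) = qfact a" and "poly Q z \<noteq> 0"
    and "e \<le> a div d" and "2 \<le> d \<or> e = a div d"
  shows "poly P z = (if e = a div d then qfact_reduced d z a / poly Q z else 0)"
proof -
  have "qint d ^ e * (P * Q) = qint d ^ e * (qint d ^ (a div d - e) * qfact_cofactor d a)"
    using quotient \<open>e \<le> a div d\<close>
    by (simp add: qfact_eq_qint_power_mult_cofactor[of a d] mult_ac flip: power_add)
  then have "P * Q = qint d ^ (a div d - e) * qfact_cofactor d a"
    using \<open>d > 0\<close> by simp
  then have at_root: "poly P z * poly Q z = poly (qint d) z ^ (a div d - e) * qfact_reduced d z a"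
    by (metis poly_mult poly_power poly_qfact_cofactor[OF z \<open>d > 0\<close>])
  show ?thesis
  proof (cases "e = a div d")
    case True
    with at_root \<open>poly Q z \<noteq> 0\<close> show ?thesis
      by (simp add: field_simps)
  next
    case False
    with assms have "2 \<le> d" "0 < a div d - e"
      by auto
    with at_root \<open>poly Q z \<noteq> 0\<close> False show ?thesis
      by (simp add: poly_qint_self[OF z] power_0_left)
  qed
qed

lemma sum_div_mult_sum_mod_eq:
  fixes f :: "'a \<Rightarrow> nat"
  shows "d * (\<Sum>i\<in>A. f i div d) + (\<Sum>i\<in>A. f i mod d) = (\<Sum>i\<in>A. f i)"
  by (simp add: sum_distrib_left flip: sum.distrib)

lemma sum_div_eq:
  fixes f :: "'a \<Rightarrow> nat"
  assumes "d > 0"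
  shows "(\<Sum>i\<in>A. f i) div d = (\<Sum>i\<in>A. f i div d) + (\<Sum>i\<in>A. f i mod d) div d"
  using assms by (simp flip: sum_div_mult_sum_mod_eq[of d f A])

lemma poly_qbinom_at_root:
  assumes z: "primitive_root d z" and "d > 0" and "b \<le> a"
  shows "poly (qbinom a b) z =
    (if b div d + (a - b) div d = a div d
     then qfact_reduced d z a / (qfact_reduced d z b * qfact_reduced d z (a - b)) else 0)"
proof -
  have "qbinom a b * (qint d ^ (b div d + (a - b) div d)
      * (qfact_cofactor d b * qfact_cofactor d (a - b))) = qfact a"
    using qbinom_mult[OF \<open>b \<le> a\<close>]
    unfolding qfact_eq_qint_power_mult_cofactor[of b d] qfact_eq_qint_power_mult_cofactor[of "a - b" d]
    by (simp add: power_add mult_ac)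
  moreover have "b div d + (a - b) div d \<le> a div d"
    using div_add1_eq[of b "a - b" d] \<open>b \<le> a\<close> by simp
  moreover have "2 \<le> d \<or> b div d + (a - b) div d = a div d"
    using \<open>d > 0\<close> \<open>b \<le> a\<close> by (cases "d = 1") auto
  ultimately show ?thesis
    using poly_qfact_quotient_at_root[OF z \<open>d > 0\<close>]
    by (simp add: poly_qfact_cofactor[OF z \<open>d > 0\<close>] qfact_reduced_nonzero[OF z \<open>d > 0\<close>])
qed

lemma poly_qmultinom_at_root:
  assumes z: "primitive_root d z" and "d > 0" and m: "m = (\<Sum>i=1..n. mu i)"
  shows "poly (qmultinom m n mu) z =
    (if (\<Sum>i=1..n. mu i div d) = m div d
     then qfact_reduced d z m / (\<Prod>i=1..n. qfact_reduced d z (mu i)) else 0)"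
proof -
  have "qmultinom m n mu * (qint d ^ (\<Sum>i=1..n. mu i div d)
      * (\<Prod>i=1..n. qfact_cofactor d (mu i))) = qfact m"
    using qmultinom_mult[OF m]
    unfolding qfact_eq_qint_power_mult_cofactor[of "mu _" d]
    by (simp add: power_sum prod.distrib)
  moreover have "(\<Sum>i=1..n. mu i div d) \<le> m div d"
    using sum_div_eq[OF \<open>d > 0\<close>, of mu] m by simp
  moreover have "2 \<le> d \<or> (\<Sum>i=1..n. mu i div d) = m div d"
    using \<open>d > 0\<close> m by (cases "d = 1") auto
  ultimately show ?thesis
    using poly_qfact_quotient_at_root[OF z \<open>d > 0\<close>]
    by (simp add: poly_prod poly_qfact_cofactor[OF z \<open>d > 0\<close>] qfact_reduced_nonzero[OF z \<open>d > 0\<close>])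
qed

lemma add_mult_mod_div:
  fixes r d q :: nat
  assumes "r < d"
  shows "(r + d * q) mod d = r" "(r + d * q) div d = q"
  using assms by simp_all

lemma dvd_add_two_mod_div:
  fixes n d :: nat
  assumes "2 \<le> d" "d dvd n + 2"
  shows "n mod d = d - 2" "n + 1 = (d - 1) + d * (n div d)" "(n + 2) div d = n div d + 1"
proof -
  obtain c where c: "n + 2 = d * c"
    using assms(2) by blast
  with assms(1) obtain c' where "c = Suc c'"
    by (cases c) auto
  with c assms(1) have n: "n = (d - 2) + d * c'" and "(n + 2) div d = Suc c'"
    by simp_all
  with assms(1) show "n mod d = d - 2" "n + 1 = (d - 1) + d * (n div d)" "(n + 2) div d = n div d + 1"
    using add_mult_mod_div[of "d - 2" d c'] by simp_all
qed

lemma a_mu_at_root: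
  fixes n d :: nat and mu :: "nat \<Rightarrow> nat"
  defines "k \<equiv> kval n mu"
  assumes z: "primitive_root d z" and "d > 0"
  shows "a_mu n mu z =
    (if n mod d + k mod d < d \<and> (\<Sum>i=1..n. mu i mod d) < d
     then qfact_reduced d z (n + k) / (qfact_reduced d z k * qfact_reduced d z n)
       * (qfact_reduced d z k / (\<Prod>i=1..n. qfact_reduced d z (mu i)))
       / poly (qint (n + 1)) z
     else 0)"
proof -
  have k: "k = (\<Sum>i=1..n. mu i)"
    unfolding k_def kval_def ..
  have "k div d + n div d = (n + k) div d \<longleftrightarrow> n mod d + k mod d < d"
    using div_add1_eq[of n k d] \<open>d > 0\<close> by (auto simp: div_eq_0_iff)
  moreover have "(\<Sum>i=1..n. mu i div d) = k div d \<longleftrightarrow> (\<Sum>i=1..n. mu i mod d) < d"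
    using sum_div_eq[OF \<open>d > 0\<close>, of mu "{1..n}"] \<open>d > 0\<close> k by (auto simp: div_eq_0_iff)
  ultimately show ?thesis
    unfolding a_mu_def k_def[symmetric]
    using poly_qbinom_at_root[OF z \<open>d > 0\<close>, of k "n + k"]
      poly_qmultinom_at_root[OF z \<open>d > 0\<close> k]
    by auto
qed

lemma kval_pos:
  assumes "n = (\<Sum>i=1..n. i * mu i)" and "n \<ge> 1"
  shows "kval n mu \<ge> 1"
proof (rule ccontr)
  assume "\<not> kval n mu \<ge> 1"
  then have "kval n mu = 0"
    by simp
  then have "\<forall>i\<in>{1..n}. mu i = 0"
    by (simp add: kval_def)
  with assms show False
    by simp
qed

lemma a_mu_at_one:
  fixes n :: nat and mu :: "nat \<Rightarrow> nat"
  defines "k \<equiv> kval n mu"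
  assumes "k \<ge> 1"
  shows "a_mu n mu 1 = of_nat ((n + k) choose (k - 1)) * multinom (k - 1) n mu"
proof -
  have reduced: "qfact_reduced (Suc 0) 1 m = fact m" for m
    by (simp add: qfact_reduced_def)
  have "poly (qint (n + 1)) 1 = of_nat (n + 1)"
    by (simp add: poly_qint)
  then have "a_mu n mu 1 = fact (n + k) / (fact n * of_nat (n + 1) * (\<Prod>i=1..n. fact (mu i)))"
    using a_mu_at_root[OF primitive_root_1_iff[THEN iffD2, OF refl], of n mu]
    by (simp add: reduced k_def del: of_nat_Suc)
  also have "\<dots> = fact (n + k) / (fact (k - 1) * fact (n + 1)) * (fact (k - 1) / (\<Prod>i=1..n. fact (mu i)))"
    by (simp add: field_simps del: of_nat_Suc)
  also have "\<dots> = of_nat ((n + k) choose (k - 1)) * multinom (k - 1) n mu"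
  proof -
    have "k - 1 \<le> n + k" "n + k - (k - 1) = n + 1"
      using \<open>k \<ge> 1\<close> by simp_all
    then have "(of_nat ((n + k) choose (k - 1)) :: complex) = fact (n + k) / (fact (k - 1) * fact (n + 1))"
      by (simp add: binomial_fact)
    then show ?thesis
      by (simp add: multinom_def)
  qed
  finally show ?thesis .
qed

lemma a_mu_single_residue_at_root:
  fixes n d :: nat and mu :: "nat \<Rightarrow> nat"
  defines "k \<equiv> kval n mu"
  assumes z: "primitive_root d z" and "2 \<le> d" and "d dvd n + 2"
    and "j \<in> {1..n}" and "mu j mod d = 1" and "\<forall>i\<in>{1..n}. i \<noteq> j \<longrightarrow> mu i mod d = 0"
  shows "a_mu n mu z = of_nat (((n + 2) div d + (k - 1) div d - 1) choose ((k - 1) div d))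
    * multinom ((k - 1) div d) n (\<lambda>i. mu i div d)"
proof -
  define K where "K = (\<Sum>i=1..n. mu i div d)"
  define N where "N = n div d"
  define C where "C = poly (qfact (d - 1)) z"
  define F where "F = poly (qfact (d - 2)) z"
  define G where "G = poly (qint (d - 1)) z"
  have residues: "(\<Sum>i=1..n. mu i mod d) = 1"
    using assms(5-7) by (subst sum_eq_1_iff) auto
  have n: "n + 1 = (d - 1) + d * N" "(n + 2) div d = N + 1"
    using dvd_add_two_mod_div(2,3)[OF \<open>2 \<le> d\<close> \<open>d dvd n + 2\<close>] by (simp_all add: N_def)
  have k_eq: "k = 1 + d * K"
    unfolding k_def kval_def K_def using sum_div_mult_sum_mod_eq[of d mu "{1..n}"] residues by simp
  then have k: "k mod d = 1" "k div d = K" "(k - 1) div d = K"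
    using add_mult_mod_div[of 1 d K] \<open>2 \<le> d\<close> by simp_all
  have "n + k = (d - 1) + d * (N + K)"
    using n(1) k_eq by (simp add: algebra_simps)
  then have nk: "(n + k) mod d = d - 1" "(n + k) div d = N + K"
    using add_mult_mod_div[of "d - 1" d "N + K"] \<open>2 \<le> d\<close> by simp_all
  have "(n + 1) mod d = d - 1"
    using add_mult_mod_div[of "d - 1" d N] n(1) \<open>2 \<le> d\<close> by simp
  then have G: "poly (qint (n + 1)) z = G"
    unfolding G_def by (metis poly_qint_mod[OF z \<open>2 \<le> d\<close>])
  have "d - 1 = Suc (d - 2)"
    using \<open>2 \<le> d\<close> by simp
  then have C: "C = F * G"
    unfolding C_def F_def G_def by (simp add: qfact_Suc)
  have "C \<noteq> 0"
    unfolding C_def using \<open>2 \<le> d\<close> by (simp add: poly_qfact_nonzero[OF z])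
  have "\<forall>i\<in>{1..n}. mu i mod d \<le> 1"
    using assms(5-7) by fastforce
  then have "(\<Prod>i=1..n. qfact_reduced d z (mu i)) = (\<Prod>i=1..n. fact (mu i div d)) * C ^ K"
    unfolding C_def K_def by (rule prod_qfact_reduced_small_residues)
  then have "a_mu n mu z = fact (N + K) * C ^ (N + K) * C / (fact K * C ^ K * (fact N * C ^ N * F))
      * (fact K * C ^ K / ((\<Prod>i=1..n. fact (mu i div d)) * C ^ K)) / G"
    using a_mu_at_root[OF z, of n mu, folded k_def] dvd_add_two_mod_div(1)[OF \<open>2 \<le> d\<close> \<open>d dvd n + 2\<close>]
      \<open>2 \<le> d\<close> residues k(1) nk G
    by (simp add: qfact_reduced_def k N_def C_def F_def)
  also have "\<dots> = fact (N + K) / (fact K * fact N) * (fact K / (\<Prod>i=1..n. fact (mu i div d)))"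
    using \<open>C \<noteq> 0\<close> by (simp add: C power_add field_simps)
  also have "\<dots> = of_nat ((N + K) choose K) * multinom K n (\<lambda>i. mu i div d)"
    by (simp add: binomial_fact multinom_def)
  finally show ?thesis
    unfolding n(2) k(3) by simp
qed

lemma a_mu_all_even_at_root:
  fixes n :: nat and mu :: "nat \<Rightarrow> nat"
  defines "k \<equiv> kval n mu"
  assumes z: "primitive_root 2 z" and "even n" and even_mu: "\<forall>i\<in>{1..n}. even (mu i)"
  shows "a_mu n mu z = of_nat (((n + k) div 2) choose (k div 2)) * multinom (k div 2) n (\<lambda>i. mu i div 2)"
proof -
  have reduced: "qfact_reduced 2 z m = fact (m div 2)" if "even m" for m
    using that by (simp add: qfact_reduced_def)
  have "even k"
    unfolding k_def kval_def using even_mu by (intro dvd_sum) auto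
  have "(n + 1) mod 2 = 1"
    using \<open>even n\<close> by presburger
  then have "poly (qint (n + 1)) z = 1"
    using poly_qint_mod[OF z, of "n + 1"] by (simp add: poly_qint)
  then have "a_mu n mu z = fact ((n + k) div 2) / (fact (k div 2) * fact (n div 2))
      * (fact (k div 2) / (\<Prod>i=1..n. fact (mu i div 2)))"
    using a_mu_at_root[OF z, of n mu, folded k_def] \<open>even n\<close> \<open>even k\<close> even_mu
    by (simp add: reduced)
  also have "\<dots> = of_nat (((n + k) div 2) choose (k div 2)) * multinom (k div 2) n (\<lambda>i. mu i div 2)"
    using \<open>even n\<close> \<open>even k\<close> by (simp add: binomial_fact multinom_def)
  finally show ?thesis .
qed

lemma a_mu_eq_0_at_root:
  fixes n d :: nat and mu :: "nat \<Rightarrow> nat"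
  assumes weight: "n = (\<Sum>i=1..n. i * mu i)"
    and z: "primitive_root d z" and "2 \<le> d" and "d dvd n + 2"
    and not_single: "\<not> (\<exists>j\<in>{1..n}. mu j mod d = 1 \<and> (\<forall>i\<in>{1..n}. i \<noteq> j \<longrightarrow> mu i mod d = 0))"
    and not_even: "\<not> (d = 2 \<and> (\<forall>i\<in>{1..n}. even (mu i)))"
  shows "a_mu n mu z = 0"
proof (rule ccontr)
  define R where "R = (\<Sum>i=1..n. mu i mod d)"
  assume "a_mu n mu z \<noteq> 0"
  then have no_carry: "n mod d + kval n mu mod d < d" "R < d"
    using a_mu_at_root[OF z, of n mu] \<open>2 \<le> d\<close> by (auto simp: R_def split: if_splits)
  have "kval n mu = R + d * (\<Sum>i=1..n. mu i div d)"
    unfolding kval_def R_def using sum_div_mult_sum_mod_eq[of d mu "{1..n}"] by simp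
  then have "kval n mu mod d = R"
    using add_mult_mod_div(1) \<open>R < d\<close> by simp
  with no_carry dvd_add_two_mod_div(1)[OF \<open>2 \<le> d\<close> \<open>d dvd n + 2\<close>] have "R \<le> 1"
    by simp
  then consider "R = 0" | "R = 1"
    by linarith
  then show False
  proof cases
    case 1
    then have "\<forall>i\<in>{1..n}. d dvd mu i"
      by (simp add: R_def dvd_eq_mod_eq_0)
    then have "d dvd n"
      by (subst weight) (auto intro: dvd_sum)
    then have "d = 2"
      using dvd_add_two_mod_div(1)[OF \<open>2 \<le> d\<close> \<open>d dvd n + 2\<close>] \<open>2 \<le> d\<close> by simp
    with \<open>\<forall>i\<in>{1..n}. d dvd mu i\<close> not_even show False
      by simp
  next
    case 2
    then have "\<exists>j\<in>{1..n}. mu j mod d = 1 \<and> (\<forall>i\<in>{1..n}. i \<noteq> j \<longrightarrow> mu i mod d = 0)"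
      unfolding R_def by (subst (asm) sum_eq_1_iff) auto
    with not_single show False
      by contradiction
  qed
qed

theorem lemma2p1:
  fixes n d :: nat and mu :: "nat \<Rightarrow> nat" and z :: complex
  assumes hn: "n = (\<Sum>i=1..n. i * mu i)"
    and hn1: "n \<ge> 1"
    and hd: "d > 0" and hdvd: "d dvd (n + 2)"
    and hz: "primitive_root d z"
  shows
    "((\<exists>j\<in>{1..n}. mu j mod d = 1 mod d \<and> (\<forall>i\<in>{1..n}. i \<noteq> j \<longrightarrow> mu i mod d = 0)) \<longrightarrow>
        a_mu n mu z =
          of_nat (((n + 2) div d + (kval n mu - 1) div d - 1) choose ((kval n mu - 1) div d))
          * multinom ((kval n mu - 1) div d) n (\<lambda>i. mu i div d))
   \<and> ((d = 2 \<and> (\<forall>i\<in>{1..n}. even (mu i))) \<longrightarrow>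
        a_mu n mu z =
          of_nat (((n + kval n mu) div 2) choose (kval n mu div 2))
          * multinom (kval n mu div 2) n (\<lambda>i. mu i div 2))
   \<and> ((\<not> (\<exists>j\<in>{1..n}. mu j mod d = 1 mod d \<and> (\<forall>i\<in>{1..n}. i \<noteq> j \<longrightarrow> mu i mod d = 0))
        \<and> \<not> (d = 2 \<and> (\<forall>i\<in>{1..n}. even (mu i)))) \<longrightarrow>
        a_mu n mu z = 0)"
proof (cases "d = 1")
  case True
  from hz have "z = 1"
    unfolding True primitive_root_1_iff .
  have "\<exists>j\<in>{1..n}. mu j mod d = 1 mod d \<and> (\<forall>i\<in>{1..n}. i \<noteq> j \<longrightarrow> mu i mod d = 0)"
    using hn1 True by auto
  moreover have "n + 2 + (kval n mu - 1) - 1 = n + kval n mu"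
    using kval_pos[OF hn hn1] by simp
  ultimately show ?thesis
    using a_mu_at_one[OF kval_pos[OF hn hn1]] True \<open>z = 1\<close> by simp
next
  case False
  with hd have "2 \<le> d"
    by simp
  then have "1 mod d = 1"
    by simp
  moreover have "d = 2 \<Longrightarrow> even n"
    using hdvd by simp
  ultimately show ?thesis
    using a_mu_single_residue_at_root[OF hz \<open>2 \<le> d\<close> hdvd]
      a_mu_all_even_at_root[of z n mu] a_mu_eq_0_at_root[OF hn hz \<open>2 \<le> d\<close> hdvd] hz
    by auto
qed

end
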